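(* Let $s\in(0,1)$, $p\in(1,+\infty)$, $\kappa\in(0,+\infty)$, and $r_1,r_2\in[0,+\infty)$ with $|B_{r_2}|\ge\kappa$. Define $$l(B_{r_2}):=\begin{cases}|B_{r_2}|^{\frac{1-sp}{n}}&\text{if } s\in(0,\frac1p),\\ |\ln|B_{r_2}||&\text{if } s=\frac1p,\\ 1&\text{if } s\in(\frac1p,1).\end{cases}$$ Then there exists $\hat c\in(0,+\infty)$ depending only on $\kappa,n,p$ such that $$L\big(B_{r_2},\mathbb R^n\setminus B_{r_2+r_1}\big)+|B_{r_2+r_1}\setminus B_{r_2}|\ge\hat c\,|B_{r_2}|^{\frac{n-1}{n}}\,l(B_{r_2}).$$
   Context: $B_r$ is the open ball of radius $r$ centered at $0$ in $\mathbb R^n$, $|\cdot|$ Lebesgue measure. For measurable $A,D\subset\mathbb R^n$, $L(A,D):=\int_A\int_D\frac{dx\,dy}{|x-y|^{n+sp}}$. *)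

theory Defs
  imports "HOL-Analysis.Analysis"
begin

definition fracL :: "real \<Rightarrow> real \<Rightarrow> 'a::euclidean_space set \<Rightarrow> 'a set \<Rightarrow> ennreal" where
  "fracL s p A D =
     (\<integral>\<^sup>+ x. \<integral>\<^sup>+ y. indicator A x * indicator D y *
        ennreal (1 / norm (x - y) powr (real DIM('a) + s * p)) \<partial>lborel \<partial>lborel)"

text \<open>The factor l(B) as a function of v = |B|.\<close>
definition lfac :: "real \<Rightarrow> real \<Rightarrow> nat \<Rightarrow> real \<Rightarrow> real" where
  "lfac s p n v = (if s < 1 / p then v powr ((1 - s * p) / real n)
                   else if s = 1 / p then \<bar>ln v\<bar> else 1)"

end

theory Submission
  imports Defs
begin

text \<open>
  For x in B_r with R - |x| \<le> D, the ball of radius D centred at x + 2D x/|x| lies outside B_R and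
  within distance 3D of x, so the kernel integral of x over the complement of B_R is at least
  c_n D^(-sp). Integrating this over annuli of B_r near its boundary bounds L(B_r, complement of B_(r+t))
  from below: for sp < 1 one annulus of width r gives r^(n-sp), for sp > 1 one annulus of width
  min r 1 gives r^(n-1), and for sp = 1 each of the roughly ln r - t dyadic annuli of widths
  2^k max t 1 contributes r^(n-1). When t is large, the measure of B_(r+t) - B_r, at least
  \<omega>_n t r^(n-1), takes over. Finally |B_r| \<ge> \<kappa> bounds r from below, so |B_r|^((n-1)/n) l(B_r) is
  at most a constant times the same power of r (times 1 + max 0 (ln r) in the critical case).
\<close>

lemma power_diff_ge_diff_mult:
  fixes a b :: real
  assumes "0 \<le> a" "a \<le> b" "0 < n"
  shows "(b - a) * b ^ (n - 1) \<le> b ^ n - a ^ n"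
proof -
  have "b ^ (n - 1) = a ^ (n - Suc (n - 1)) * b ^ (n - 1)"
    using assms(3) by simp
  also have "\<dots> \<le> (\<Sum>i<n. a ^ (n - Suc i) * b ^ i)"
    using assms by (intro member_le_sum) auto
  finally show ?thesis
    unfolding power_diff_sumr2[of b n a] using assms by (intro mult_left_mono) auto
qed

lemma emeasure_annulus:
  assumes "0 \<le> a" "a \<le> b"
  shows "emeasure lborel (ball (0::'a::euclidean_space) b - ball 0 a)
           = ennreal (unit_ball_vol DIM('a) * (b ^ DIM('a) - a ^ DIM('a)))"
proof -
  have "emeasure lborel (ball (0::'a) b - ball 0 a)
          = emeasure lborel (ball (0::'a) b) - emeasure lborel (ball (0::'a) a)"
    using assms emeasure_lborel_ball_finite[of "0::'a" a] by (intro emeasure_Diff) auto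
  also have "\<dots> = ennreal (unit_ball_vol DIM('a) * b ^ DIM('a) - unit_ball_vol DIM('a) * a ^ DIM('a))"
    using assms by (simp add: emeasure_ball ennreal_minus power_mono)
  finally show ?thesis
    by (simp add: right_diff_distrib)
qed

lemma emeasure_annulus_ge:
  assumes "0 \<le> a" "a \<le> b"
  shows "ennreal (unit_ball_vol DIM('a) * (b - a) * b ^ (DIM('a) - 1))
           \<le> emeasure lborel (ball (0::'a::euclidean_space) b - ball 0 a)"
  unfolding emeasure_annulus[OF assms] mult.assoc
  using power_diff_ge_diff_mult[OF assms DIM_positive] by (intro ennreal_leI mult_left_mono) auto

lemma kernel_integral_outside_ball_ge:
  fixes x :: "'a::euclidean_space"
  assumes D: "0 < D" and x: "R - D \<le> norm x" and \<sigma>: "0 \<le> \<sigma>"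
  shows "ennreal (unit_ball_vol DIM('a) / (3 ^ DIM('a) * (3 * D) powr \<sigma>))
           \<le> (\<integral>\<^sup>+y. indicator (- ball 0 R) y * ennreal (1 / norm (x - y) powr (real DIM('a) + \<sigma>)) \<partial>lborel)"
proof -
  obtain u :: 'a where u: "norm u = 1" "x = norm x *\<^sub>R u"
  proof (cases "x = 0")
    case True
    then show ?thesis using that vector_choose_size[of 1] by auto
  next
    case False
    then show ?thesis using that[of "sgn x"] by (simp add: norm_sgn sgn_div_norm)
  qed
  define c where "c = (norm x + 2 * D) *\<^sub>R u"
  define k where "k = 1 / (3 * D) powr (real DIM('a) + \<sigma>)"
  have "ennreal k * indicator (ball c D) y
          \<le> indicator (- ball 0 R) y * ennreal (1 / norm (x - y) powr (real DIM('a) + \<sigma>))" for y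
  proof (cases "y \<in> ball c D")
    case True
    then have cy: "norm (c - y) < D" by (simp add: dist_norm)
    have xc: "norm (x - c) = 2 * D" and nc: "norm c = norm x + 2 * D"
      using D by (subst u(2); simp add: c_def u(1) flip: scaleR_diff_left)+
    have "norm c \<le> norm y + norm (c - y)" by (rule norm_triangle_sub)
    then have "R \<le> norm y" using x cy nc by linarith
    moreover have "norm (x - y) \<le> 3 * D"
      using norm_triangle_ineq[of "x - c" "c - y"] xc cy by simp
    moreover have "D \<le> norm (x - y)"
      using norm_triangle_ineq[of "x - y" "y - c"] xc cy by (simp add: norm_minus_commute)
    ultimately have "k \<le> 1 / norm (x - y) powr (real DIM('a) + \<sigma>)"
      unfolding k_def using D \<sigma> by (intro divide_left_mono powr_mono2) (auto intro!: mult_pos_pos)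
    then show ?thesis using True \<open>R \<le> norm y\<close> by (simp add: ennreal_leI)
  qed simp
  then have "ennreal k * emeasure lborel (ball c D)
               \<le> (\<integral>\<^sup>+y. indicator (- ball 0 R) y * ennreal (1 / norm (x - y) powr (real DIM('a) + \<sigma>)) \<partial>lborel)"
    by (subst nn_integral_cmult_indicator[symmetric]) (auto intro: nn_integral_mono)
  moreover have "k * (unit_ball_vol DIM('a) * D ^ DIM('a))
                   = unit_ball_vol DIM('a) / (3 ^ DIM('a) * (3 * D) powr \<sigma>)"
    using D by (simp add: k_def powr_add powr_realpow power_mult_distrib)
  moreover have "0 \<le> k" by (simp add: k_def)
  ultimately show ?thesis
    using D by (simp add: emeasure_ball ennreal_mult'[symmetric])
qed

lemma fracL_ge_sum_emeasure:
  fixes S :: "'i \<Rightarrow> 'a::euclidean_space set" and c :: "'i \<Rightarrow> ennreal"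
  assumes I: "finite I" "disjoint_family_on S I"
    and S: "\<And>k. k \<in> I \<Longrightarrow> S k \<in> sets lborel" "\<And>k. k \<in> I \<Longrightarrow> S k \<subseteq> A"
    and c: "\<And>k x. k \<in> I \<Longrightarrow> x \<in> S k \<Longrightarrow>
              c k \<le> (\<integral>\<^sup>+y. indicator E y * ennreal (1 / norm (x - y) powr (real DIM('a) + s * p)) \<partial>lborel)"
  shows "(\<Sum>k\<in>I. c k * emeasure lborel (S k)) \<le> fracL s p A E"
proof -
  have "(\<Sum>k\<in>I. c k * emeasure lborel (S k)) = (\<integral>\<^sup>+x. (\<Sum>k\<in>I. c k * indicator (S k) x) \<partial>lborel)"
    using S by (simp add: nn_integral_sum nn_integral_cmult_indicator)
  also have "\<dots> \<le> fracL s p A E"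
    unfolding fracL_def
  proof (rule nn_integral_mono)
    fix x :: 'a
    show "(\<Sum>k\<in>I. c k * indicator (S k) x)
            \<le> (\<integral>\<^sup>+y. indicator A x * indicator E y * ennreal (1 / norm (x - y) powr (real DIM('a) + s * p)) \<partial>lborel)"
    proof (cases "\<exists>j\<in>I. x \<in> S j")
      case True
      then obtain j where j: "j \<in> I" "x \<in> S j" by blast
      have "indicator (S k) x = (if k = j then 1 else 0 :: ennreal)" if "k \<in> I" for k
        using disjoint_family_onD[OF I(2) that j(1)] j by (auto simp: indicator_def)
      then have "(\<Sum>k\<in>I. c k * indicator (S k) x) = (\<Sum>k\<in>I. if k = j then c k else 0)"
        by (intro sum.cong) auto
      also have "\<dots> = c j" using I(1) j(1) by simp
      finally have "(\<Sum>k\<in>I. c k * indicator (S k) x) = c j" .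
      then show ?thesis using c[OF j] S(2)[OF j(1)] j(2) by auto
    next
      case False
      then show ?thesis by (simp add: indicator_def)
    qed
  qed
  finally show ?thesis .
qed

lemma fracL_ge_annulus:
  assumes D: "0 < D" and ab: "0 \<le> a" "a \<le> b" "b \<le> r" and R: "R - D \<le> a" and sp: "0 \<le> s * p"
  shows "ennreal (unit_ball_vol DIM('a) / (3 ^ DIM('a) * (3 * D) powr (s * p))
                  * (unit_ball_vol DIM('a) * (b - a) * b ^ (DIM('a) - 1)))
           \<le> fracL s p (ball (0::'a::euclidean_space) r) (- ball 0 R)"
proof -
  define k where "k = unit_ball_vol DIM('a) / (3 ^ DIM('a) * (3 * D) powr (s * p))"
  have "0 \<le> k" by (simp add: k_def)
  then have "ennreal (k * (unit_ball_vol DIM('a) * (b - a) * b ^ (DIM('a) - 1)))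
               \<le> ennreal k * emeasure lborel (ball (0::'a) b - ball 0 a)"
    using emeasure_annulus_ge[OF ab(1,2), where 'a='a] by (simp add: ennreal_mult' mult_left_mono)
  also have "\<dots> = (\<Sum>i\<in>{0::nat}. ennreal k * emeasure lborel (ball (0::'a) b - ball 0 a))"
    by simp
  also have "\<dots> \<le> fracL s p (ball (0::'a) r) (- ball 0 R)"
  proof (rule fracL_ge_sum_emeasure)
    fix x :: 'a assume "x \<in> ball 0 b - ball 0 a"
    then have "R - D \<le> norm x" using R by auto
    then show "ennreal k \<le> (\<integral>\<^sup>+y. indicator (- ball 0 R) y
                              * ennreal (1 / norm (x - y) powr (real DIM('a) + s * p)) \<partial>lborel)"
      unfolding k_def by (rule kernel_integral_outside_ball_ge[OF D _ sp])
  qed (use ab in \<open>auto simp: disjoint_family_on_def\<close>)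
  finally show ?thesis by (simp add: k_def)
qed

lemma emeasure_annulus_ge_width:
  assumes "0 \<le> r" "0 \<le> t"
  shows "ennreal (unit_ball_vol DIM('a) * t * r ^ (DIM('a) - 1))
           \<le> emeasure lborel (ball (0::'a::euclidean_space) (r + t) - ball 0 r)"
proof -
  have "ennreal (unit_ball_vol DIM('a) * t * r ^ (DIM('a) - 1))
          \<le> ennreal (unit_ball_vol DIM('a) * t * (r + t) ^ (DIM('a) - 1))"
    using assms by (intro ennreal_leI mult_left_mono power_mono) auto
  also have "\<dots> \<le> emeasure lborel (ball (0::'a) (r + t) - ball 0 r)"
    using emeasure_annulus_ge[of r "r + t", where 'a='a] assms by simp
  finally show ?thesis .
qed

lemma min_one_le_powr:
  fixes r e :: real
  assumes "0 < r" "0 \<le> e" "e \<le> 1"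
  shows "min 1 r \<le> r powr e"
proof (cases "1 \<le> r")
  case True
  then show ?thesis using assms by (simp add: ge_one_powr_ge_zero)
next
  case False
  then have "r powr 1 \<le> r powr e" using assms by (intro powr_mono') auto
  then show ?thesis using assms by simp
qed

lemma fracL_plus_annulus_ge_subcritical:
  fixes m r t :: real
  assumes sp: "0 \<le> s * p" "s * p < 1" and m: "0 < m" "m \<le> 1" "m \<le> r" and t: "0 \<le> t"
  shows "ennreal (min (unit_ball_vol DIM('a) ^ 2 / (3 ^ DIM('a) * 6)) (unit_ball_vol DIM('a) * m)
                  * r powr (real DIM('a) - s * p))
           \<le> fracL s p (ball (0::'a::euclidean_space) r) (- ball 0 (r + t))
             + emeasure lborel (ball (0::'a) (r + t) - ball 0 r)"
  (is "ennreal (?c * ?X) \<le> ?L + ?M")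
proof -
  define \<omega> where "\<omega> = unit_ball_vol DIM('a)"
  have \<omega>: "0 < \<omega>" by (simp add: \<omega>_def)
  have r: "0 < r" using m by linarith
  have X: "0 \<le> ?X" by simp
  have split: "r powr (s * p) * ?X = r * r ^ (DIM('a) - 1)"
    using r by (simp add: powr_add[symmetric] powr_realpow flip: power_Suc)
  show ?thesis
  proof (cases "r \<le> t")
    case True
    have "m \<le> r powr (s * p)"
      using min_one_le_powr[OF r sp(1)] sp(2) m by linarith
    then have "?c \<le> \<omega> * r powr (s * p)"
      using \<omega> by (auto simp: \<omega>_def intro: order_trans[OF min.cobounded2])
    then have "?c * ?X \<le> \<omega> * (r powr (s * p) * ?X)"
      using X by (simp add: mult.assoc[symmetric] mult_right_mono)
    also have "\<dots> \<le> \<omega> * t * r ^ (DIM('a) - 1)"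
      unfolding split using True \<omega> r by (simp add: mult.assoc mult_right_mono)
    finally have "ennreal (?c * ?X) \<le> ennreal (\<omega> * t * r ^ (DIM('a) - 1))"
      by (rule ennreal_leI)
    also have "\<dots> \<le> ?M"
      unfolding \<omega>_def using emeasure_annulus_ge_width[where 'a='a] r t by simp
    finally show ?thesis by (simp add: add_increasing)
  next
    case False
    define D where "D = r + t"
    have D: "0 < D" "D \<le> 2 * r" using r t False by (auto simp: D_def)
    have "(3 * D) powr (s * p) \<le> (6 * r) powr (s * p)"
      using D sp by (intro powr_mono2) auto
    also have "\<dots> \<le> 6 * r powr (s * p)"
      using r sp powr_mono[of "s * p" 1 6] by (simp add: powr_mult)
    finally have kernel: "\<omega> / (3 ^ DIM('a) * (6 * r powr (s * p))) \<le> \<omega> / (3 ^ DIM('a) * (3 * D) powr (s * p))"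
      using \<omega> D by (intro divide_left_mono mult_left_mono) auto
    have "\<omega> ^ 2 / (3 ^ DIM('a) * 6) * ?X
            = \<omega> / (3 ^ DIM('a) * (6 * r powr (s * p))) * (\<omega> * (r powr (s * p) * ?X))"
      using r by (simp add: power2_eq_square field_simps)
    also have "\<dots> \<le> \<omega> / (3 ^ DIM('a) * (3 * D) powr (s * p)) * (\<omega> * (r * r ^ (DIM('a) - 1)))"
      unfolding split using \<omega> r by (intro mult_right_mono[OF kernel]) auto
    finally have "\<omega> ^ 2 / (3 ^ DIM('a) * 6) * ?X
                    \<le> \<omega> / (3 ^ DIM('a) * (3 * D) powr (s * p)) * (\<omega> * (r * r ^ (DIM('a) - 1)))" .
    then have "ennreal (?c * ?X) \<le> ennreal (\<omega> / (3 ^ DIM('a) * (3 * D) powr (s * p)) * (\<omega> * (r * r ^ (DIM('a) - 1))))"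
      unfolding \<omega>_def using X by (intro ennreal_leI order_trans[OF mult_right_mono[OF min.cobounded1]])
    also have "\<dots> \<le> ?L"
      using fracL_ge_annulus[of D 0 r r "r + t" s p, where 'a='a] D r sp by (simp add: D_def \<omega>_def mult.assoc)
    finally show ?thesis by (simp add: add_increasing2)
  qed
qed

lemma fracL_plus_annulus_ge_supercritical:
  fixes m r t :: real
  assumes sp: "0 < s" "s \<le> 1" "1 \<le> s * p" and m: "0 < m" "m \<le> 1" "m \<le> r" and t: "0 \<le> t"
  shows "ennreal (min (unit_ball_vol DIM('a)) (unit_ball_vol DIM('a) ^ 2 * m / (3 ^ DIM('a) * 6 powr p))
                  * r ^ (DIM('a) - 1))
           \<le> fracL s p (ball (0::'a::euclidean_space) r) (- ball 0 (r + t))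
             + emeasure lborel (ball (0::'a) (r + t) - ball 0 r)"
  (is "ennreal (?c * ?X) \<le> ?L + ?M")
proof -
  define \<omega> where "\<omega> = unit_ball_vol DIM('a)"
  have \<omega>: "0 < \<omega>" by (simp add: \<omega>_def)
  have r: "0 < r" using m by linarith
  have X: "0 \<le> ?X" using r by simp
  show ?thesis
  proof (cases "1 \<le> t")
    case True
    have "?c \<le> \<omega> * t"
      using True \<omega> by (auto simp: \<omega>_def intro: order_trans[OF min.cobounded1])
    then have "?c * ?X \<le> \<omega> * t * ?X"
      using X by (rule mult_right_mono)
    then have "ennreal (?c * ?X) \<le> ennreal (\<omega> * t * ?X)"
      by (rule ennreal_leI)
    also have "\<dots> \<le> ?M"
      unfolding \<omega>_def using emeasure_annulus_ge_width[where 'a='a] r t by simp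
    finally show ?thesis by (simp add: add_increasing)
  next
    case False
    define a where "a = min r 1"
    define D where "D = t + a"
    have a: "m \<le> a" "a \<le> r" using m by (auto simp: a_def)
    have D: "0 < D" "D \<le> 2" using m t False by (auto simp: D_def a_def)
    have "(3 * D) powr (s * p) \<le> 6 powr (s * p)"
      using D sp by (intro powr_mono2) auto
    also have "\<dots> \<le> 6 powr p"
      using sp mult_right_mono[of s 1 p] zero_less_mult_pos[of s p] by (intro powr_mono) auto
    finally have kernel: "\<omega> / (3 ^ DIM('a) * 6 powr p) \<le> \<omega> / (3 ^ DIM('a) * (3 * D) powr (s * p))"
      using \<omega> D by (intro divide_left_mono mult_left_mono) auto
    have "\<omega> ^ 2 * m / (3 ^ DIM('a) * 6 powr p) * ?X = \<omega> / (3 ^ DIM('a) * 6 powr p) * (\<omega> * m * ?X)"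
      by (simp add: power2_eq_square)
    also have "\<dots> \<le> \<omega> / (3 ^ DIM('a) * (3 * D) powr (s * p)) * (\<omega> * (r - (r - a)) * ?X)"
      using kernel a \<omega> m X by (intro mult_mono) auto
    finally have "ennreal (?c * ?X) \<le> ennreal (\<omega> / (3 ^ DIM('a) * (3 * D) powr (s * p)) * (\<omega> * (r - (r - a)) * ?X))"
      unfolding \<omega>_def using X by (intro ennreal_leI order_trans[OF mult_right_mono[OF min.cobounded2]])
    also have "\<dots> \<le> ?L"
      unfolding \<omega>_def using D a m sp by (intro fracL_ge_annulus) (auto simp: D_def)
    finally show ?thesis by (simp add: add_increasing2)
  qed
qed

lemma emeasure_dyadic_annulus_ge:
  assumes "0 < d" "2 * d \<le> r"
  shows "ennreal (unit_ball_vol DIM('a) * d * (r / 2) ^ (DIM('a) - 1))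
           \<le> emeasure lborel (ball (0::'a::euclidean_space) (r - d) - ball 0 (r - 2 * d))"
proof -
  have "(r / 2) ^ (DIM('a) - 1) \<le> (r - d) ^ (DIM('a) - 1)"
    using assms by (intro power_mono) auto
  then have "ennreal (unit_ball_vol DIM('a) * d * (r / 2) ^ (DIM('a) - 1))
               \<le> ennreal (unit_ball_vol DIM('a) * ((r - d) - (r - 2 * d)) * (r - d) ^ (DIM('a) - 1))"
    using assms by (intro ennreal_leI) (simp add: mult_left_mono)
  also have "\<dots> \<le> emeasure lborel (ball (0::'a) (r - d) - ball 0 (r - 2 * d))"
    using assms by (intro emeasure_annulus_ge) auto
  finally show ?thesis .
qed

lemma fracL_ge_dyadic_annuli:
  fixes r t T :: real and K :: nat
  assumes sp: "s * p = 1" and T: "0 \<le> t" "t \<le> T" "0 < T" and K: "T * 2 ^ K \<le> r"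
  shows "ennreal (real K * (unit_ball_vol DIM('a) ^ 2 / 3 ^ (DIM('a) + 2) * (r / 2) ^ (DIM('a) - 1)))
           \<le> fracL s p (ball (0::'a::euclidean_space) r) (- ball 0 (r + t))"
proof -
  define \<omega> where "\<omega> = unit_ball_vol DIM('a)"
  have \<omega>: "0 < \<omega>" by (simp add: \<omega>_def)
  define d where "d k = T * 2 ^ k" for k :: nat
  define S where "S k = ball (0::'a) (r - d k) - ball 0 (r - 2 * d k)" for k
  define c where "c k = \<omega> / (3 ^ (DIM('a) + 2) * d k)" for k
  have d: "0 < d k" "T \<le> d k" for k
    using T by (auto simp: d_def)
  have d_double: "2 * d j \<le> d k" if "j < k" for j k
    using T power_increasing[of "Suc j" k "2::real"] that by (simp add: d_def)
  have d_le: "2 * d k \<le> r" if "k < K" for k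
    using d_double[OF that] K by (simp add: d_def)
  have disj: "disjoint_family_on S {..<K}"
  proof -
    have "S j \<inter> S k = {}" if "j < k" for j k
      using d_double[OF that] by (auto simp: S_def)
    then show ?thesis
      unfolding disjoint_family_on_def by (metis inf_commute linorder_neqE_nat)
  qed
  have "(\<Sum>k<K. ennreal (c k) * emeasure lborel (S k)) \<le> fracL s p (ball (0::'a) r) (- ball 0 (r + t))"
  proof (rule fracL_ge_sum_emeasure[OF _ disj])
    fix k x assume "k \<in> {..<K}" "x \<in> S k"
    then have "r + t - (t + 2 * d k) \<le> norm x" by (auto simp: S_def)
    from kernel_integral_outside_ball_ge[OF _ this, of 1] d[of k] T
    have "ennreal (\<omega> / (3 ^ DIM('a) * (3 * (t + 2 * d k))))
            \<le> (\<integral>\<^sup>+y. indicator (- ball 0 (r + t)) y * ennreal (1 / norm (x - y) powr (real DIM('a) + s * p)) \<partial>lborel)"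
      by (simp add: \<omega>_def sp)
    moreover have "c k \<le> \<omega> / (3 ^ DIM('a) * (3 * (t + 2 * d k)))"
      unfolding c_def using \<omega> d[of k] T by (intro divide_left_mono) auto
    ultimately show "ennreal (c k)
            \<le> (\<integral>\<^sup>+y. indicator (- ball 0 (r + t)) y * ennreal (1 / norm (x - y) powr (real DIM('a) + s * p)) \<partial>lborel)"
      by (meson ennreal_leI order_trans)
  qed (auto simp: S_def)
  moreover have "ennreal (\<omega> ^ 2 / 3 ^ (DIM('a) + 2) * (r / 2) ^ (DIM('a) - 1)) \<le> ennreal (c k) * emeasure lborel (S k)"
    if "k < K" for k
  proof -
    have "ennreal (\<omega> ^ 2 / 3 ^ (DIM('a) + 2) * (r / 2) ^ (DIM('a) - 1))
            = ennreal (c k) * ennreal (\<omega> * d k * (r / 2) ^ (DIM('a) - 1))"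
      using d[of k] \<omega> by (simp add: c_def power2_eq_square mult.assoc flip: ennreal_mult')
    also have "\<dots> \<le> ennreal (c k) * emeasure lborel (S k)"
      unfolding S_def \<omega>_def using d[of k] d_le[OF that]
      by (intro mult_left_mono emeasure_dyadic_annulus_ge) auto
    finally show ?thesis .
  qed
  then have "(\<Sum>k<K. ennreal (\<omega> ^ 2 / 3 ^ (DIM('a) + 2) * (r / 2) ^ (DIM('a) - 1)))
               \<le> (\<Sum>k<K. ennreal (c k) * emeasure lborel (S k))"
    by (intro sum_mono) auto
  moreover have "ennreal (real K * (\<omega> ^ 2 / 3 ^ (DIM('a) + 2) * (r / 2) ^ (DIM('a) - 1)))
                   = (\<Sum>k<K. ennreal (\<omega> ^ 2 / 3 ^ (DIM('a) + 2) * (r / 2) ^ (DIM('a) - 1)))"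
    by (subst ennreal_mult') (simp_all add: ennreal_of_nat_eq_real_of_nat)
  ultimately show ?thesis
    by (simp add: \<omega>_def)
qed

lemma ex_power2_le_ln_le:
  fixes x :: real
  assumes "1 \<le> x"
  shows "\<exists>K::nat. 2 ^ K \<le> x \<and> ln x \<le> real K + 1"
proof -
  define K where "K = nat \<lfloor>log 2 x\<rfloor>"
  have K: "real K \<le> log 2 x" "log 2 x < real K + 1"
    using assms by (auto simp: K_def)
  have "2 ^ K \<le> x"
    using powr_mono[OF K(1), of 2] assms by (simp add: powr_realpow)
  moreover have "ln x \<le> real K + 1"
  proof -
    have "ln x = log 2 x * ln 2" using assms by (simp add: log_def)
    also have "\<dots> \<le> (real K + 1) * 1"
      using K(2) assms ln_le_minus_one[of 2] by (intro mult_mono) auto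
    finally show ?thesis by simp
  qed
  ultimately show ?thesis by blast
qed

lemma fracL_ge_critical:
  fixes r t :: real
  assumes sp: "s * p = 1" and r: "0 < r" and t: "0 \<le> t"
  shows "ennreal (unit_ball_vol DIM('a) ^ 2 / 3 ^ (DIM('a) + 2) * (r / 2) ^ (DIM('a) - 1) * (ln r - t - 1))
           \<le> fracL s p (ball (0::'a::euclidean_space) r) (- ball 0 (r + t))"
proof (cases "ln r - t - 1 \<le> 0")
  case True
  then have "unit_ball_vol DIM('a) ^ 2 / 3 ^ (DIM('a) + 2) * (r / 2) ^ (DIM('a) - 1) * (ln r - t - 1) \<le> 0"
    using r by (intro mult_nonneg_nonpos) auto
  then show ?thesis
    by (simp add: ennreal_neg)
next
  case False
  define T where "T = max t 1"
  have T: "t \<le> T" "0 < T" by (auto simp: T_def)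
  have "ln T \<le> t"
    using t ln_le_minus_one[of t] by (auto simp: T_def max_def)
  then have lnrT: "ln r - t - 1 \<le> ln (r / T) - 1"
    using r T by (simp add: ln_div)
  then have "1 \<le> r / T"
    using False r T by (smt (verit) ln_le_zero_iff divide_pos_pos)
  then obtain K :: nat where K: "2 ^ K \<le> r / T" "ln (r / T) \<le> real K + 1"
    using ex_power2_le_ln_le by blast
  have "T * 2 ^ K \<le> r"
    using K(1) T by (simp add: field_simps)
  with fracL_ge_dyadic_annuli[OF sp t T] have
    "ennreal (real K * (unit_ball_vol DIM('a) ^ 2 / 3 ^ (DIM('a) + 2) * (r / 2) ^ (DIM('a) - 1)))
       \<le> fracL s p (ball (0::'a) r) (- ball 0 (r + t))" .
  moreover have "ln r - t - 1 \<le> real K"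
    using lnrT K(2) by linarith
  then have "unit_ball_vol DIM('a) ^ 2 / 3 ^ (DIM('a) + 2) * (r / 2) ^ (DIM('a) - 1) * (ln r - t - 1)
               \<le> real K * (unit_ball_vol DIM('a) ^ 2 / 3 ^ (DIM('a) + 2) * (r / 2) ^ (DIM('a) - 1))"
    using r by (subst mult.commute) (intro mult_right_mono; simp)
  ultimately show ?thesis
    by (meson ennreal_leI order_trans)
qed

lemma pos_part_split_le_max:
  fixes \<mu> \<alpha> \<beta> \<gamma> X t \<rho> :: real
  assumes "0 \<le> \<mu>" "\<mu> \<le> \<alpha>" "\<mu> \<le> \<beta>" "\<mu> \<le> \<gamma>" "0 \<le> X" "0 \<le> t"
  shows "\<mu> / 4 * (1 + max 0 \<rho>) * X \<le> max (\<alpha> * X) (max (\<beta> * t * X) (\<gamma> * (\<rho> - t - 1) * X))"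
    (is "_ \<le> ?M")
proof -
  have a: "\<mu> * X \<le> \<alpha> * X" and b: "\<mu> * t * X \<le> \<beta> * t * X"
    using assms by (auto intro!: mult_right_mono)
  have c: "\<mu> * max 0 (\<rho> - t - 1) * X \<le> max 0 (\<gamma> * (\<rho> - t - 1) * X)"
    using assms by (cases "0 \<le> \<rho> - t - 1") (auto intro!: mult_right_mono max.coboundedI2)
  have "0 \<le> \<mu> * X" "0 \<le> \<mu> * t * X" using assms by simp_all
  then have M: "\<alpha> * X \<le> ?M" "\<beta> * t * X \<le> ?M" "max 0 (\<gamma> * (\<rho> - t - 1) * X) \<le> ?M"
    using a by auto
  have "max 0 \<rho> \<le> 1 + t + max 0 (\<rho> - t - 1)"
    using assms by (auto simp: max_def)
  then have "\<mu> * (1 + max 0 \<rho>) * X \<le> \<mu> * (2 + t + max 0 (\<rho> - t - 1)) * X"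
    using assms by (intro mult_right_mono mult_left_mono) auto
  also have "\<dots> = 2 * (\<mu> * X) + \<mu> * t * X + \<mu> * max 0 (\<rho> - t - 1) * X"
    by (simp add: algebra_simps)
  finally show ?thesis
    using a b c M by linarith
qed

lemma fracL_plus_annulus_ge_critical:
  fixes m r t :: real
  assumes sp: "0 < s" "s \<le> 1" "s * p = 1" and m: "0 < m" "m \<le> 1" "m \<le> r" and t: "0 \<le> t"
  shows "ennreal (min (min (unit_ball_vol DIM('a)) (unit_ball_vol DIM('a) ^ 2 * m / (3 ^ DIM('a) * 6 powr p)))
                      (unit_ball_vol DIM('a) ^ 2 / (3 ^ (DIM('a) + 2) * 2 ^ (DIM('a) - 1))) / 4
                  * (1 + max 0 (ln r)) * r ^ (DIM('a) - 1))
           \<le> fracL s p (ball (0::'a::euclidean_space) r) (- ball 0 (r + t))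
             + emeasure lborel (ball (0::'a) (r + t) - ball 0 r)"
  (is "ennreal (min ?cB ?C / 4 * _ * ?X) \<le> ?L + ?M")
proof -
  define \<omega> where "\<omega> = unit_ball_vol DIM('a)"
  define \<mu> where "\<mu> = min ?cB ?C"
  have r: "0 < r" using m by linarith
  have X: "0 \<le> ?X" using r by simp
  have \<mu>: "0 \<le> \<mu>" "\<mu> \<le> ?cB" "\<mu> \<le> \<omega>" "\<mu> \<le> ?C"
    using m by (auto simp: \<mu>_def \<omega>_def)
  define a where "a = ?cB * ?X"
  define b where "b = \<omega> * t * ?X"
  define c where "c = ?C * (ln r - t - 1) * ?X"
  have "ennreal a \<le> ?L + ?M"
    unfolding a_def using fracL_plus_annulus_ge_supercritical[OF sp(1,2) _ m t, where 'a='a] sp(3) by simp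
  moreover have "ennreal b \<le> ?L + ?M"
    unfolding b_def \<omega>_def using emeasure_annulus_ge_width[where 'a='a] r t
    by (auto intro: order_trans add_increasing)
  moreover have "ennreal c \<le> ?L + ?M"
    unfolding c_def using fracL_ge_critical[OF sp(3) r t, where 'a='a]
    by (auto simp: power_divide field_simps intro: order_trans add_increasing2)
  ultimately have "ennreal (max a (max b c)) \<le> ?L + ?M"
    by (simp add: max_def)
  moreover have "\<mu> / 4 * (1 + max 0 (ln r)) * ?X \<le> max a (max b c)"
    unfolding a_def b_def c_def using \<mu> X t by (intro pos_part_split_le_max) auto
  ultimately show ?thesis
    unfolding \<mu>_def by (meson ennreal_leI order_trans)
qed

text \<open>The size of |B_r|^((n-1)/n) l(B_r) in terms of r, up to constants depending on n and on a
  lower bound for r.\<close>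

definition radial_scale :: "real \<Rightarrow> real \<Rightarrow> nat \<Rightarrow> real \<Rightarrow> real" where
  "radial_scale s p n r =
     (if s * p < 1 then r powr (real n - s * p)
      else if s * p = 1 then (1 + max 0 (ln r)) * r ^ (n - 1)
      else r ^ (n - 1))"

lemma radial_scale_nonneg: "0 \<le> r \<Longrightarrow> 0 \<le> radial_scale s p n r"
  by (simp add: radial_scale_def)

lemma fracL_plus_annulus_ge_radial_scale:
  fixes p m :: real
  assumes p: "0 < p" and m: "0 < m" "m \<le> 1"
  shows "\<exists>c>0. \<forall>s r t. 0 < s \<and> s \<le> 1 \<and> m \<le> r \<and> 0 \<le> t \<longrightarrow>
           ennreal (c * radial_scale s p DIM('a) r)
             \<le> fracL s p (ball (0::'a::euclidean_space) r) (- ball 0 (r + t))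
               + emeasure lborel (ball (0::'a) (r + t) - ball 0 r)"
proof -
  define \<omega> where "\<omega> = unit_ball_vol DIM('a)"
  define cA where "cA = min (\<omega> ^ 2 / (3 ^ DIM('a) * 6)) (\<omega> * m)"
  define cB where "cB = min \<omega> (\<omega> ^ 2 * m / (3 ^ DIM('a) * 6 powr p))"
  define cC where "cC = min cB (\<omega> ^ 2 / (3 ^ (DIM('a) + 2) * 2 ^ (DIM('a) - 1))) / 4"
  define c where "c = min cA (min cB cC)"
  have "0 < \<omega>" by (simp add: \<omega>_def)
  then have "0 < c"
    using m by (simp add: c_def cA_def cB_def cC_def)
  moreover have "ennreal (c * radial_scale s p DIM('a) r)
                   \<le> fracL s p (ball (0::'a) r) (- ball 0 (r + t)) + emeasure lborel (ball (0::'a) (r + t) - ball 0 r)"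
    if s: "0 < s" "s \<le> 1" and r: "m \<le> r" and t: "0 \<le> t" for s r t
  proof -
    have "0 \<le> radial_scale s p DIM('a) r"
      using m r by (intro radial_scale_nonneg) linarith
    then have scale: "c * radial_scale s p DIM('a) r \<le> c' * radial_scale s p DIM('a) r" if "c \<le> c'" for c'
      using that by (simp add: mult_right_mono)
    have sp: "0 < s * p" using s p by simp
    consider "s * p < 1" | "s * p = 1" | "1 < s * p" by linarith
    then show ?thesis
    proof cases
      case 1
      then have "c * radial_scale s p DIM('a) r \<le> cA * r powr (real DIM('a) - s * p)"
        using scale[of cA] by (simp add: radial_scale_def c_def)
      then show ?thesis
        using fracL_plus_annulus_ge_subcritical[OF _ 1 m r t, where 'a='a] sp
        unfolding cA_def \<omega>_def by (meson ennreal_leI order_trans less_imp_le)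
    next
      case 2
      then have "c * radial_scale s p DIM('a) r \<le> cC * (1 + max 0 (ln r)) * r ^ (DIM('a) - 1)"
        using scale[of cC] by (simp add: radial_scale_def c_def mult.assoc)
      then show ?thesis
        using fracL_plus_annulus_ge_critical[OF s 2 m r t, where 'a='a]
        unfolding cC_def cB_def \<omega>_def by (meson ennreal_leI order_trans)
    next
      case 3
      then have "c * radial_scale s p DIM('a) r \<le> cB * r ^ (DIM('a) - 1)"
        using scale[of cB] by (simp add: radial_scale_def c_def)
      then show ?thesis
        using fracL_plus_annulus_ge_supercritical[OF s _ m r t, where 'a='a] 3
        unfolding cB_def \<omega>_def by (meson ennreal_leI order_trans less_imp_le)
    qed
  qed
  ultimately show ?thesis by blast
qed

lemma measure_ball_powr_le:
  fixes r e :: real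
  assumes r: "0 < r" and e: "0 \<le> e" "e \<le> real DIM('a)"
  shows "measure lborel (ball (0::'a::euclidean_space) r) powr (e / real DIM('a))
           \<le> max 1 (unit_ball_vol DIM('a)) * r powr e"
proof -
  define \<omega> where "\<omega> = unit_ball_vol DIM('a)"
  have \<omega>: "0 < \<omega>" by (simp add: \<omega>_def)
  have "measure lborel (ball (0::'a) r) powr (e / real DIM('a))
          = \<omega> powr (e / real DIM('a)) * r powr e"
    using r \<omega> by (simp add: content_ball \<omega>_def powr_mult powr_powr flip: powr_realpow)
  also have "\<dots> \<le> max 1 \<omega> * r powr e"
  proof (intro mult_right_mono)
    show "\<omega> powr (e / real DIM('a)) \<le> max 1 \<omega>"
    proof (cases "1 \<le> \<omega>")
      case True
      then show ?thesis using e powr_mono[of "e / real DIM('a)" 1 \<omega>] by simp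
    next
      case False
      then show ?thesis using e \<omega> powr_mono'[of 0 "e / real DIM('a)" \<omega>] by simp
    qed
  qed simp
  finally show ?thesis by (simp add: \<omega>_def)
qed

lemma abs_ln_measure_ball_le:
  fixes m r :: real
  assumes m: "0 < m" "m \<le> 1" "m \<le> r"
  shows "\<bar>ln (measure lborel (ball (0::'a::euclidean_space) r))\<bar>
           \<le> (\<bar>ln (unit_ball_vol DIM('a))\<bar> + real DIM('a) * (1 - ln m)) * (1 + max 0 (ln r))"
proof -
  define \<omega> where "\<omega> = unit_ball_vol DIM('a)"
  have \<omega>: "0 < \<omega>" by (simp add: \<omega>_def)
  have r: "0 < r" using m by linarith
  have lnm: "ln m \<le> 0" "ln m \<le> ln r" using m by auto
  have "measure lborel (ball (0::'a) r) = \<omega> * r ^ DIM('a)"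
    using r by (simp add: content_ball \<omega>_def)
  then have "\<bar>ln (measure lborel (ball (0::'a) r))\<bar> = \<bar>ln \<omega> + real DIM('a) * ln r\<bar>"
    using r \<omega> by (simp add: ln_mult ln_realpow)
  also have "\<dots> \<le> \<bar>ln \<omega>\<bar> + real DIM('a) * \<bar>ln r\<bar>"
    by (simp add: abs_mult abs_triangle_ineq[THEN order_trans])
  also have "\<dots> \<le> \<bar>ln \<omega>\<bar> + real DIM('a) * (- ln m + max 0 (ln r))"
    using lnm by (intro add_left_mono mult_left_mono) (auto simp: max_def)
  also have "\<dots> \<le> (\<bar>ln \<omega>\<bar> + real DIM('a) * (1 - ln m)) * (1 + max 0 (ln r))"
  proof -
    have "real DIM('a) * 1 \<le> real DIM('a) * (1 - ln m)"
      using lnm by (intro mult_left_mono) auto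
    then have "real DIM('a) \<le> \<bar>ln \<omega>\<bar> + real DIM('a) * (1 - ln m)"
      using abs_ge_zero[of "ln \<omega>"] by linarith
    then have "real DIM('a) * max 0 (ln r) \<le> (\<bar>ln \<omega>\<bar> + real DIM('a) * (1 - ln m)) * max 0 (ln r)"
      by (rule mult_right_mono) simp
    then show ?thesis by (simp add: algebra_simps)
  qed
  finally show ?thesis by (simp add: \<omega>_def)
qed

lemma measure_ball_lfac_le_radial_scale:
  fixes p m :: real
  assumes p: "0 < p" and m: "0 < m" "m \<le> 1"
  shows "\<exists>C>0. \<forall>s r. 0 < s \<and> m \<le> r \<longrightarrow>
           measure lborel (ball (0::'a::euclidean_space) r) powr ((real DIM('a) - 1) / real DIM('a))
             * lfac s p DIM('a) (measure lborel (ball (0::'a) r))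
           \<le> C * radial_scale s p DIM('a) r"
proof -
  define W where "W = max 1 (unit_ball_vol DIM('a))"
  define A where "A = \<bar>ln (unit_ball_vol DIM('a))\<bar> + real DIM('a) * (1 - ln m)"
  have W: "1 \<le> W" by (simp add: W_def)
  have "real DIM('a) * 1 \<le> real DIM('a) * (1 - ln m)"
    using m by (intro mult_left_mono) auto
  moreover have n: "1 \<le> real DIM('a)"
    using DIM_positive[where 'a='a] by linarith
  ultimately have A: "1 \<le> A"
    using abs_ge_zero[of "ln (unit_ball_vol DIM('a))"] unfolding A_def by linarith
  have "measure lborel (ball (0::'a) r) powr ((real DIM('a) - 1) / real DIM('a))
          * lfac s p DIM('a) (measure lborel (ball (0::'a) r))
        \<le> W * A * radial_scale s p DIM('a) r"
    if s: "0 < s" and r: "m \<le> r" for s r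
  proof -
    define v where "v = measure lborel (ball (0::'a) r)"
    have r0: "0 < r" using m r by linarith
    have v: "0 < v" using r0 by (simp add: v_def content_ball)
    have n1: "real DIM('a) - 1 = real (DIM('a) - 1)"
      by (simp add: of_nat_diff Suc_leI)
    have "r powr (real DIM('a) - 1) = r ^ (DIM('a) - 1)"
      unfolding n1 using r0 by (rule powr_realpow)
    moreover have "v powr ((real DIM('a) - 1) / real DIM('a)) \<le> W * r powr (real DIM('a) - 1)"
      unfolding v_def W_def using r0 by (intro measure_ball_powr_le) auto
    ultimately have base: "v powr ((real DIM('a) - 1) / real DIM('a)) \<le> W * r ^ (DIM('a) - 1)"
      by simp
    have WA: "W * x \<le> W * A * x" if "0 \<le> x" for x
      using W A that by (simp add: mult_right_mono mult_left_mono)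
    consider "s * p < 1" | "s * p = 1" | "1 < s * p" by linarith
    then show ?thesis
    proof cases
      case 1
      then have "lfac s p DIM('a) v = v powr ((1 - s * p) / real DIM('a))"
        using p by (simp add: lfac_def field_simps)
      then have "v powr ((real DIM('a) - 1) / real DIM('a)) * lfac s p DIM('a) v
                   = v powr ((real DIM('a) - s * p) / real DIM('a))"
        using v by (simp add: powr_add[symmetric] add_divide_distrib[symmetric])
      also have "\<dots> \<le> W * r powr (real DIM('a) - s * p)"
        unfolding v_def W_def using r0 1 n mult_pos_pos[OF s p] by (intro measure_ball_powr_le) linarith+
      also have "\<dots> \<le> W * A * r powr (real DIM('a) - s * p)"
        by (rule WA) simp
      finally show ?thesis using 1 by (simp add: radial_scale_def v_def)
    next
      case 2
      then have "lfac s p DIM('a) v = \<bar>ln v\<bar>"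
        using p by (simp add: lfac_def field_simps)
      moreover have "\<bar>ln v\<bar> \<le> A * (1 + max 0 (ln r))"
        unfolding v_def A_def using m r by (rule abs_ln_measure_ball_le)
      ultimately have "v powr ((real DIM('a) - 1) / real DIM('a)) * lfac s p DIM('a) v
                         \<le> (W * r ^ (DIM('a) - 1)) * (A * (1 + max 0 (ln r)))"
        using base W r0 by (intro mult_mono) auto
      then show ?thesis using 2 by (simp add: radial_scale_def v_def algebra_simps)
    next
      case 3
      then have "lfac s p DIM('a) v = 1"
        using p by (auto simp: lfac_def field_simps)
      then have "v powr ((real DIM('a) - 1) / real DIM('a)) * lfac s p DIM('a) v \<le> W * A * r ^ (DIM('a) - 1)"
        using base WA[of "r ^ (DIM('a) - 1)"] r0 by simp
      then show ?thesis using 3 by (simp add: radial_scale_def v_def)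
    qed
  qed
  moreover have "0 < W * A" using W A by simp
  ultimately show ?thesis by blast
qed

lemma radius_ge_of_measure_ball_ge:
  fixes \<kappa> :: real
  assumes \<kappa>: "0 < \<kappa>"
  obtains m where "0 < m" "m \<le> 1" "\<And>r. \<kappa> \<le> measure lborel (ball (0::'a::euclidean_space) r) \<Longrightarrow> m \<le> r"
proof
  define \<omega> where "\<omega> = unit_ball_vol DIM('a)"
  have \<omega>: "0 < \<omega>" by (simp add: \<omega>_def)
  define m where "m = min 1 ((\<kappa> / \<omega>) powr (1 / real DIM('a)))"
  show "0 < m" "m \<le> 1" using \<kappa> \<omega> by (auto simp: m_def)
  fix r assume r: "\<kappa> \<le> measure lborel (ball (0::'a) r)"
  then have "0 < r" using \<kappa> by (cases "0 < r") (auto simp: ball_empty)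
  then have "\<kappa> / \<omega> \<le> r ^ DIM('a)"
    using r \<omega> by (simp add: content_ball \<omega>_def field_simps)
  then have "(\<kappa> / \<omega>) powr (1 / real DIM('a)) \<le> (r ^ DIM('a)) powr (1 / real DIM('a))"
    using \<kappa> \<omega> by (intro powr_mono2) auto
  also have "\<dots> = r"
    using \<open>0 < r\<close> by (simp add: powr_powr flip: powr_realpow)
  finally show "m \<le> r" by (simp add: m_def)
qed

theorem mainTheorem10:
  fixes p \<kappa> :: real
  assumes "1 < p" and "0 < \<kappa>"
  shows "\<exists>c>0. \<forall>s r1 r2. 0 < s \<and> s < 1 \<and> 0 \<le> r1 \<and> 0 \<le> r2 \<and>
            measure lborel (ball (0::'a::euclidean_space) r2) \<ge> \<kappa> \<longrightarrow>
            fracL s p (ball (0::'a) r2) (- ball 0 (r2 + r1))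
              + emeasure lborel (ball (0::'a) (r2 + r1) - ball 0 r2)
            \<ge> ennreal (c * measure lborel (ball (0::'a) r2) powr ((real DIM('a) - 1) / real DIM('a))
                   * lfac s p DIM('a) (measure lborel (ball (0::'a) r2)))"
proof -
  have p: "0 < p" using assms(1) by simp
  obtain m where m: "0 < m" "m \<le> 1"
    and radius: "\<And>r. \<kappa> \<le> measure lborel (ball (0::'a) r) \<Longrightarrow> m \<le> r"
    using radius_ge_of_measure_ball_ge[OF assms(2)] by blast
  obtain c where c: "0 < c" and lower: "\<forall>s r t. 0 < s \<and> s \<le> 1 \<and> m \<le> r \<and> 0 \<le> t \<longrightarrow>
      ennreal (c * radial_scale s p DIM('a) r)
        \<le> fracL s p (ball (0::'a) r) (- ball 0 (r + t)) + emeasure lborel (ball (0::'a) (r + t) - ball 0 r)"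
    using fracL_plus_annulus_ge_radial_scale[OF p m] by blast
  obtain C where C: "0 < C" and upper: "\<forall>s r. 0 < s \<and> m \<le> r \<longrightarrow>
      measure lborel (ball (0::'a) r) powr ((real DIM('a) - 1) / real DIM('a))
        * lfac s p DIM('a) (measure lborel (ball (0::'a) r)) \<le> C * radial_scale s p DIM('a) r"
    using measure_ball_lfac_le_radial_scale[OF p m] by blast
  show ?thesis
  proof (intro exI[of _ "c / C"] conjI allI impI)
    show "0 < c / C" using c C by simp
    fix s r1 r2 :: real
    assume H: "0 < s \<and> s < 1 \<and> 0 \<le> r1 \<and> 0 \<le> r2 \<and> \<kappa> \<le> measure lborel (ball (0::'a) r2)"
    then have r2: "m \<le> r2" using radius by blast
    have "measure lborel (ball (0::'a) r2) powr ((real DIM('a) - 1) / real DIM('a))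
            * lfac s p DIM('a) (measure lborel (ball (0::'a) r2)) \<le> C * radial_scale s p DIM('a) r2"
      using upper H r2 by blast
    then have "c / C * measure lborel (ball (0::'a) r2) powr ((real DIM('a) - 1) / real DIM('a))
            * lfac s p DIM('a) (measure lborel (ball (0::'a) r2))
          \<le> c / C * (C * radial_scale s p DIM('a) r2)"
      unfolding mult.assoc using c C by (intro mult_left_mono) auto
    also have "\<dots> = c * radial_scale s p DIM('a) r2"
      using C by simp
    finally have "ennreal (c / C * measure lborel (ball (0::'a) r2) powr ((real DIM('a) - 1) / real DIM('a))
            * lfac s p DIM('a) (measure lborel (ball (0::'a) r2)))
          \<le> ennreal (c * radial_scale s p DIM('a) r2)"
      by (rule ennreal_leI)
    also have "\<dots> \<le> fracL s p (ball (0::'a) r2) (- ball 0 (r2 + r1))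
                      + emeasure lborel (ball (0::'a) (r2 + r1) - ball 0 r2)"
      using lower H r2 by simp
    finally show "ennreal (c / C * measure lborel (ball (0::'a) r2) powr ((real DIM('a) - 1) / real DIM('a))
            * lfac s p DIM('a) (measure lborel (ball (0::'a) r2)))
          \<le> fracL s p (ball (0::'a) r2) (- ball 0 (r2 + r1))
              + emeasure lborel (ball (0::'a) (r2 + r1) - ball 0 r2)" .
  qed
qed

end
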